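(* For $i\in[s]$ let $p_i$ be a prime, $m_i\ge1$, $q_i=p_i^{m_i}$, $\omega_i$ a primitive $q_i$-th root of unity in $\mathbb C$, $k_i,r_i\ge0$, and $\alpha^{(i)}_t,\alpha^{(i)}_{t,j}\in\{0,\dots,q_i-1\}$ ($t\in[k_i]$, $j\in[r_i]$). Let $\mathcal P'$ be the CSP instance with pairwise distinct variables $x_{i,t}$ ($i\in[s],t\in[k_i]$) and $y_{i,j}$ ($i\in[s],j\in[r_i]$), where $x_{i,t},y_{i,j}$ take values in the set $U_{q_i}$ of $q_i$-th roots of unity, with constraints $x_{i,t}=\omega_i^{\alpha^{(i)}_t}\prod_{j=1}^{r_i}y_{i,j}^{\alpha^{(i)}_{t,j}}$. Let $$G'_i=\{x_{i,t}-\omega_i^{\alpha^{(i)}_t}\textstyle\prod_{j}y_{i,j}^{\alpha^{(i)}_{t,j}}:t\in[k_i]\}\cup\{y_{i,j}^{q_i}-1:j\in[r_i]\}.$$ Then $G'=\bigcup_{i=1}^sG'_i$ is a Gröbner basis for $\mathtt I(\mathcal P')=\mathbf I(\mathsf{Sol}(\mathcal P'))$ with respect to the lexicographic order $x_{1,1}\succ\dots\succ x_{1,k_1}\succ\dots\succ x_{s,1}\succ\dots\succ x_{s,k_s}\succ y_{1,1}\succ\dots\succ y_{1,r_1}\succ\dots\succ y_{s,1}\succ\dots\succ y_{s,r_s}$.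
   Context: $\mathsf{Sol}(\mathcal P')$ is the set of points (in $\mathbb C$ with each coordinate in its domain $U_{q_i}$) satisfying all constraints. $\mathtt I(\mathcal P')$ is the ideal generated by domain polynomials $z^{q_i}-1$ for each variable $z$ of sort $i$ and the constraint polynomials; $\mathbf I(S)$ is the ideal of polynomials vanishing on $S$. A Gröbner basis of $I$ is a finite $G\subseteq I$ with $\langle\mathrm{LT}(g):g\in G\rangle=\langle\mathrm{LT}(I)\rangle$. *)

theory Defs
  imports Complex_Main "HOL-Computational_Algebra.Primes" "HOL-Library.Poly_Mapping" "HOL-Library.Product_Lexorder"
begin

(* Variables: X i t stands for x_{i,t}, Y i j stands for y_{i,j} *)
datatype var = X nat nat | Y nat nat

type_synonym mono = "var \<Rightarrow>\<^sub>0 nat"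
type_synonym mpoly = "mono \<Rightarrow>\<^sub>0 complex"

definition Var :: "var \<Rightarrow> mpoly" where
  "Var v = Poly_Mapping.single (Poly_Mapping.single v 1) 1"

definition Const :: "complex \<Rightarrow> mpoly" where
  "Const c = Poly_Mapping.single 0 c"

definition mono_eval :: "(var \<Rightarrow> complex) \<Rightarrow> mono \<Rightarrow> complex" where
  "mono_eval a mm = (\<Prod>v\<in>Poly_Mapping.keys mm. a v ^ Poly_Mapping.lookup mm v)"

definition eval :: "(var \<Rightarrow> complex) \<Rightarrow> mpoly \<Rightarrow> complex" where
  "eval a f = (\<Sum>mm\<in>Poly_Mapping.keys f. Poly_Mapping.lookup f mm * mono_eval a mm)"

definition Vars :: "nat \<Rightarrow> (nat \<Rightarrow> nat) \<Rightarrow> (nat \<Rightarrow> nat) \<Rightarrow> var set" where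
  "Vars s k r = {X i t | i t. i \<in> {1..s} \<and> t \<in> {1..k i}} \<union> {Y i j | i j. i \<in> {1..s} \<and> j \<in> {1..r i}}"

fun sort_of :: "var \<Rightarrow> nat" where
  "sort_of (X i t) = i" | "sort_of (Y i j) = i"

definition polyring :: "var set \<Rightarrow> mpoly set" where
  "polyring V = {p. \<forall>m\<in>Poly_Mapping.keys p. Poly_Mapping.keys m \<subseteq> V}"

definition is_ideal :: "mpoly set \<Rightarrow> mpoly set \<Rightarrow> bool" where
  "is_ideal R I \<longleftrightarrow> I \<subseteq> R \<and> 0 \<in> I \<and> (\<forall>a\<in>I. \<forall>b\<in>I. a + b \<in> I)
      \<and> (\<forall>f\<in>R. \<forall>a\<in>I. f * a \<in> I)"

definition ideal_gen :: "mpoly set \<Rightarrow> mpoly set \<Rightarrow> mpoly set" where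
  "ideal_gen R S = \<Inter>{I. S \<subseteq> I \<and> is_ideal R I}"

definition vanishing_ideal :: "mpoly set \<Rightarrow> (var \<Rightarrow> complex) set \<Rightarrow> mpoly set" where
  "vanishing_ideal R S = {p \<in> R. \<forall>a\<in>S. eval a p = 0}"

(* variable order: v \<succ> w iff rank v < rank w; this gives
   x_{1,1} > ... > x_{1,k_1} > ... > x_{s,k_s} > y_{1,1} > ... > y_{s,r_s} *)
fun rank :: "var \<Rightarrow> nat \<times> nat \<times> nat" where
  "rank (X i t) = (0, i, t)" | "rank (Y i j) = (1, i, j)"

definition lex_less :: "mono \<Rightarrow> mono \<Rightarrow> bool" where
  "lex_less a b \<longleftrightarrow> (\<exists>v. Poly_Mapping.lookup a v < Poly_Mapping.lookup b v \<and>
       (\<forall>w. rank w < rank v \<longrightarrow> Poly_Mapping.lookup a w = Poly_Mapping.lookup b w))"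

definition lead_monom :: "mpoly \<Rightarrow> mono" where
  "lead_monom p = (THE m. m \<in> Poly_Mapping.keys p \<and> (\<forall>m'\<in>Poly_Mapping.keys p. m' \<noteq> m \<longrightarrow> lex_less m' m))"

definition LT :: "mpoly \<Rightarrow> mpoly" where
  "LT p = Poly_Mapping.single (lead_monom p) (Poly_Mapping.lookup p (lead_monom p))"

definition groebner_basis :: "mpoly set \<Rightarrow> mpoly set \<Rightarrow> mpoly set \<Rightarrow> bool" where
  "groebner_basis R G I \<longleftrightarrow> finite G \<and> G \<subseteq> I \<and> ideal_gen R (LT ` G) = ideal_gen R (LT ` I)"

definition primitive_root :: "nat \<Rightarrow> complex \<Rightarrow> bool" where
  "primitive_root n w \<longleftrightarrow> w ^ n = 1 \<and> (\<forall>d. 0 < d \<and> d < n \<longrightarrow> w ^ d \<noteq> 1)"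

definition constr_poly ::
  "(nat \<Rightarrow> nat) \<Rightarrow> (nat \<Rightarrow> complex) \<Rightarrow> (nat \<Rightarrow> nat \<Rightarrow> nat) \<Rightarrow> (nat \<Rightarrow> nat \<Rightarrow> nat \<Rightarrow> nat)
    \<Rightarrow> nat \<Rightarrow> nat \<Rightarrow> mpoly" where
  "constr_poly r \<omega> \<alpha> \<beta> i t = Var (X i t) -
     Const (\<omega> i ^ \<alpha> i t) * (\<Prod>j\<in>{1..r i}. Var (Y i j) ^ \<beta> i t j)"

(* solutions of P': points of C^Vars (extended by 0 outside Vars) *)
definition Sol ::
  "nat \<Rightarrow> (nat \<Rightarrow> nat) \<Rightarrow> (nat \<Rightarrow> nat) \<Rightarrow> (nat \<Rightarrow> nat) \<Rightarrow> (nat \<Rightarrow> complex)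
    \<Rightarrow> (nat \<Rightarrow> nat \<Rightarrow> nat) \<Rightarrow> (nat \<Rightarrow> nat \<Rightarrow> nat \<Rightarrow> nat) \<Rightarrow> (var \<Rightarrow> complex) set" where
  "Sol s k r q \<omega> \<alpha> \<beta> = {a. (\<forall>v. v \<notin> Vars s k r \<longrightarrow> a v = 0)
      \<and> (\<forall>v\<in>Vars s k r. a v ^ q (sort_of v) = 1)
      \<and> (\<forall>i\<in>{1..s}. \<forall>t\<in>{1..k i}.
           a (X i t) = \<omega> i ^ \<alpha> i t * (\<Prod>j\<in>{1..r i}. a (Y i j) ^ \<beta> i t j))}"

definition instance_ideal ::
  "nat \<Rightarrow> (nat \<Rightarrow> nat) \<Rightarrow> (nat \<Rightarrow> nat) \<Rightarrow> (nat \<Rightarrow> nat) \<Rightarrow> (nat \<Rightarrow> complex)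
    \<Rightarrow> (nat \<Rightarrow> nat \<Rightarrow> nat) \<Rightarrow> (nat \<Rightarrow> nat \<Rightarrow> nat \<Rightarrow> nat) \<Rightarrow> mpoly set" where
  "instance_ideal s k r q \<omega> \<alpha> \<beta> = ideal_gen (polyring (Vars s k r))
     ({Var v ^ q (sort_of v) - 1 | v. v \<in> Vars s k r}
      \<union> {constr_poly r \<omega> \<alpha> \<beta> i t | i t. i \<in> {1..s} \<and> t \<in> {1..k i}})"

definition Gi ::
  "(nat \<Rightarrow> nat) \<Rightarrow> (nat \<Rightarrow> nat) \<Rightarrow> (nat \<Rightarrow> nat) \<Rightarrow> (nat \<Rightarrow> complex)
    \<Rightarrow> (nat \<Rightarrow> nat \<Rightarrow> nat) \<Rightarrow> (nat \<Rightarrow> nat \<Rightarrow> nat \<Rightarrow> nat) \<Rightarrow> nat \<Rightarrow> mpoly set" where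
  "Gi k r q \<omega> \<alpha> \<beta> i = {constr_poly r \<omega> \<alpha> \<beta> i t | t. t \<in> {1..k i}}
      \<union> {Var (Y i j) ^ q i - 1 | j. j \<in> {1..r i}}"

end

theory Submission
  imports Defs "HOL-Library.FuncSet"
begin

text \<open>Modulo the ideal \<open>J\<close> generated by \<open>G'\<close>, the rules
  \<open>x\<^sub>i\<^sub>,\<^sub>t \<mapsto> \<omega>\<^sub>i^\<alpha>\<^sub>t \<Prod>\<^sub>j y\<^sub>i\<^sub>,\<^sub>j^\<alpha>\<^sub>t\<^sub>,\<^sub>j\<close> and \<open>y\<^sub>i\<^sub>,\<^sub>j^q\<^sub>i \<mapsto> 1\<close>
  rewrite every monomial, in lex-decreasing steps, into a multiple of a standard monomial: one in the
  \<open>y\<close>'s alone with every exponent below \<open>q\<^sub>i\<close>. A combination of standard monomials vanishing on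
  \<open>Sol\<close> is zero: \<open>Sol\<close> contains all points where the \<open>y\<close>'s run independently through the roots
  of unity, and on this group the standard monomials are pairwise orthogonal characters. So every
  polynomial vanishing on \<open>Sol\<close> lies in \<open>J\<close>, and as \<open>J \<subseteq> I(P')\<close> and the generators of \<open>I(P')\<close>
  vanish on \<open>Sol\<close>, the three ideals coincide. A nonzero \<open>f \<in> J\<close> cannot have a standard leading
  monomial, since its normal form would keep the leading coefficient and still vanish on \<open>Sol\<close>; so
  that monomial is divisible by some \<open>x\<^sub>i\<^sub>,\<^sub>t\<close> or \<open>y\<^sub>i\<^sub>,\<^sub>j^q\<^sub>i\<close>, the leading monomials
  of \<open>G'\<close>.\<close>

lemma mono_eval_superset:
  assumes "finite S" "Poly_Mapping.keys mm \<subseteq> S"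
  shows "mono_eval a mm = (\<Prod>v\<in>S. a v ^ Poly_Mapping.lookup mm v)"
  unfolding mono_eval_def
  by (rule prod.mono_neutral_left) (use assms in \<open>auto simp: in_keys_iff\<close>)

lemma mono_eval_add: "mono_eval a (m1 + m2) = mono_eval a m1 * mono_eval a m2"
proof -
  let ?S = "Poly_Mapping.keys m1 \<union> Poly_Mapping.keys m2"
  have S: "finite ?S" by simp
  have "mono_eval a (m1 + m2) = (\<Prod>v\<in>?S. a v ^ Poly_Mapping.lookup (m1 + m2) v)"
    by (rule mono_eval_superset[OF S keys_add])
  also have "\<dots> = (\<Prod>v\<in>?S. a v ^ Poly_Mapping.lookup m1 v) * (\<Prod>v\<in>?S. a v ^ Poly_Mapping.lookup m2 v)"
    by (simp add: lookup_add power_add prod.distrib)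
  also have "\<dots> = mono_eval a m1 * mono_eval a m2"
    using mono_eval_superset[OF S, of m1 a] mono_eval_superset[OF S, of m2 a] by simp
  finally show ?thesis .
qed

lemma eval_superset:
  assumes "finite S" "Poly_Mapping.keys f \<subseteq> S"
  shows "eval a f = (\<Sum>m\<in>S. Poly_Mapping.lookup f m * mono_eval a m)"
  unfolding eval_def
  by (rule sum.mono_neutral_left) (use assms in \<open>auto simp: in_keys_iff\<close>)

lemma eval_zero [simp]: "eval a 0 = 0"
  by (simp add: eval_def)

lemma eval_add: "eval a (f + g) = eval a f + eval a g"
proof -
  let ?S = "Poly_Mapping.keys f \<union> Poly_Mapping.keys g"
  have S: "finite ?S" by simp
  have "eval a (f + g) = (\<Sum>m\<in>?S. Poly_Mapping.lookup (f + g) m * mono_eval a m)"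
    by (rule eval_superset[OF S keys_add])
  also have "\<dots> = (\<Sum>m\<in>?S. Poly_Mapping.lookup f m * mono_eval a m)
                + (\<Sum>m\<in>?S. Poly_Mapping.lookup g m * mono_eval a m)"
    by (simp add: lookup_add distrib_right sum.distrib)
  also have "\<dots> = eval a f + eval a g"
    using eval_superset[OF S, of f a] eval_superset[OF S, of g a] by simp
  finally show ?thesis .
qed

lemma eval_diff: "eval a (f - g) = eval a f - eval a g"
  using eval_add[of a f "- g"] by (simp add: eval_def sum_negf)

lemma eval_single: "eval a (Poly_Mapping.single m c) = c * mono_eval a m"
  by (simp add: eval_def)

lemma eval_sum: "eval a (sum F A) = (\<Sum>i\<in>A. eval a (F i))"
  by (induction A rule: infinite_finite_induct) (simp_all add: eval_add)

lemma poly_mapping_sum_monomials: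
  "f = (\<Sum>m\<in>Poly_Mapping.keys f. Poly_Mapping.single m (Poly_Mapping.lookup f m))"
  by (rule poly_mapping_eqI) (auto simp: lookup_sum lookup_single when_def in_keys_iff)

lemma eval_mult: "eval a (f * g) = eval a f * eval a g"
proof -
  let ?F = "Poly_Mapping.keys f" and ?G = "Poly_Mapping.keys g"
  have "f * g = (\<Sum>m\<in>?F. Poly_Mapping.single m (Poly_Mapping.lookup f m))
              * (\<Sum>m'\<in>?G. Poly_Mapping.single m' (Poly_Mapping.lookup g m'))"
    using poly_mapping_sum_monomials[of f] poly_mapping_sum_monomials[of g] by simp
  also have "\<dots> = (\<Sum>m\<in>?F. \<Sum>m'\<in>?G.
      Poly_Mapping.single (m + m') (Poly_Mapping.lookup f m * Poly_Mapping.lookup g m'))"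
    by (simp only: sum_product mult_single)
  finally have "eval a (f * g) = (\<Sum>m\<in>?F. \<Sum>m'\<in>?G.
      Poly_Mapping.lookup f m * Poly_Mapping.lookup g m' * (mono_eval a m * mono_eval a m'))"
    by (simp add: eval_sum eval_single mono_eval_add)
  also have "\<dots> = eval a f * eval a g"
    unfolding eval_def sum_product by (simp add: algebra_simps)
  finally show ?thesis .
qed

lemma eval_one [simp]: "eval a 1 = 1"
  using eval_single[of a 0 1] by (simp add: mono_eval_def)

lemma eval_power: "eval a (f ^ n) = eval a f ^ n"
  by (induction n) (simp_all add: eval_mult)

lemma eval_prod: "eval a (prod F A) = (\<Prod>i\<in>A. eval a (F i))"
  by (induction A rule: infinite_finite_induct) (simp_all add: eval_mult)

lemma eval_Var [simp]: "eval a (Var v) = a v"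
  by (simp add: Var_def eval_single mono_eval_def)

lemma eval_Const [simp]: "eval a (Const c) = c"
  by (simp add: Const_def eval_single mono_eval_def)

lemma keys_add_nat:
  "Poly_Mapping.keys ((m1 :: 'a \<Rightarrow>\<^sub>0 nat) + m2) = Poly_Mapping.keys m1 \<union> Poly_Mapping.keys m2"
  by (auto simp: in_keys_iff lookup_add)

lemma polyring_single: "Poly_Mapping.keys m \<subseteq> V \<Longrightarrow> Poly_Mapping.single m c \<in> polyring V"
  by (simp add: polyring_def)

lemma polyring_zero [simp]: "0 \<in> polyring V"
  by (simp add: polyring_def)

lemma polyring_add: "f \<in> polyring V \<Longrightarrow> g \<in> polyring V \<Longrightarrow> f + g \<in> polyring V"
  unfolding polyring_def using keys_add[of f g] by blast

lemma polyring_diff: "f \<in> polyring V \<Longrightarrow> g \<in> polyring V \<Longrightarrow> f - g \<in> polyring V"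
  using polyring_add[of f V "- g"] by (simp add: polyring_def)

lemma polyring_mult: "f \<in> polyring V \<Longrightarrow> g \<in> polyring V \<Longrightarrow> f * g \<in> polyring V"
  unfolding polyring_def using keys_mult[of f g] by (fastforce simp: keys_add_nat)

lemma polyring_one [simp]: "1 \<in> polyring V"
  by (simp add: polyring_def)

lemma polyring_Const [simp]: "Const c \<in> polyring V"
  by (simp add: Const_def polyring_single)

lemma polyring_Var: "v \<in> V \<Longrightarrow> Var v \<in> polyring V"
  by (simp add: Var_def polyring_single)

lemma polyring_power: "f \<in> polyring V \<Longrightarrow> f ^ n \<in> polyring V"
  by (induction n) (simp_all add: polyring_mult)

lemma polyring_binomial:
  "Poly_Mapping.keys a \<subseteq> V \<Longrightarrow> Poly_Mapping.keys b \<subseteq> V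
    \<Longrightarrow> Poly_Mapping.single a 1 - Poly_Mapping.single b c \<in> polyring V"
  by (simp add: polyring_diff polyring_single)

lemma is_ideal_zero: "is_ideal R I \<Longrightarrow> 0 \<in> I"
  by (simp add: is_ideal_def)

lemma is_ideal_add: "is_ideal R I \<Longrightarrow> a \<in> I \<Longrightarrow> b \<in> I \<Longrightarrow> a + b \<in> I"
  by (simp add: is_ideal_def)

lemma is_ideal_mult: "is_ideal R I \<Longrightarrow> f \<in> R \<Longrightarrow> a \<in> I \<Longrightarrow> f * a \<in> I"
  by (simp add: is_ideal_def)

lemma is_ideal_sum: "is_ideal R I \<Longrightarrow> (\<And>i. i \<in> A \<Longrightarrow> F i \<in> I) \<Longrightarrow> sum F A \<in> I"
  by (induction A rule: infinite_finite_induct) (simp_all add: is_ideal_add is_ideal_zero)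

lemma is_ideal_diff:
  assumes "is_ideal (polyring V) I" "a \<in> I" "b \<in> I"
  shows "a - b \<in> I"
proof -
  have "Const (-1) * b \<in> I"
    using assms(1,3) by (rule is_ideal_mult[OF _ polyring_Const])
  then have "- b \<in> I"
    by (simp add: Const_def single_uminus)
  then show ?thesis
    using is_ideal_add[OF assms(1,2)] by fastforce
qed

lemma is_ideal_polyring: "is_ideal (polyring V) (polyring V)"
  by (simp add: is_ideal_def polyring_add polyring_mult)

lemma is_ideal_vanishing_ideal: "is_ideal (polyring V) (vanishing_ideal (polyring V) S)"
  unfolding is_ideal_def vanishing_ideal_def
  by (simp add: polyring_add polyring_mult eval_add eval_mult)

lemma ideal_gen_subset: "S \<subseteq> ideal_gen R S"
  unfolding ideal_gen_def by blast

lemma ideal_gen_least: "is_ideal R I \<Longrightarrow> S \<subseteq> I \<Longrightarrow> ideal_gen R S \<subseteq> I"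
  unfolding ideal_gen_def by blast

lemma ideal_gen_mono: "S \<subseteq> S' \<Longrightarrow> ideal_gen R S \<subseteq> ideal_gen R S'"
  unfolding ideal_gen_def by blast

lemma is_ideal_ideal_gen:
  assumes "S \<subseteq> polyring V"
  shows "is_ideal (polyring V) (ideal_gen (polyring V) S)"
proof -
  have "ideal_gen (polyring V) S \<subseteq> polyring V"
    using assms by (rule ideal_gen_least[OF is_ideal_polyring])
  then show ?thesis
    unfolding is_ideal_def ideal_gen_def by blast
qed

lemma Var_power: "Var v ^ n = Poly_Mapping.single (Poly_Mapping.single v n) 1"
  by (induction n) (simp_all add: Var_def mult_single single_add[symmetric])

lemma prod_single_one:
  "(\<Prod>j\<in>A. Poly_Mapping.single (m j) (1::complex)) = Poly_Mapping.single (\<Sum>j\<in>A. m j) 1"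
  by (induction A rule: infinite_finite_induct) (simp_all add: mult_single)

lemma Const_mult_single: "Const c * Poly_Mapping.single m d = Poly_Mapping.single m (c * d)"
  by (simp add: Const_def mult_single)

lemma split_monomial:
  fixes m :: mono
  assumes "n \<le> Poly_Mapping.lookup m v"
  shows "m = (m - Poly_Mapping.single v n) + Poly_Mapping.single v n"
  using assms
  by (intro poly_mapping_eqI) (auto simp: lookup_add lookup_minus lookup_single when_def)

definition weighted_degree :: "(var \<Rightarrow> nat) \<Rightarrow> mono \<Rightarrow> nat" where
  "weighted_degree w m = (\<Sum>v\<in>Poly_Mapping.keys m. w v * Poly_Mapping.lookup m v)"

lemma weighted_degree_superset:
  assumes "finite A" "Poly_Mapping.keys m \<subseteq> A"
  shows "weighted_degree w m = (\<Sum>v\<in>A. w v * Poly_Mapping.lookup m v)"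
  unfolding weighted_degree_def
  by (rule sum.mono_neutral_left) (use assms in \<open>auto simp: in_keys_iff\<close>)

lemma weighted_degree_add:
  "weighted_degree w (a + b) = weighted_degree w a + weighted_degree w b"
proof -
  let ?A = "Poly_Mapping.keys a \<union> Poly_Mapping.keys b"
  have A: "finite ?A" by simp
  show ?thesis
    using weighted_degree_superset[OF A keys_add, of w]
      weighted_degree_superset[OF A, of a w] weighted_degree_superset[OF A, of b w]
    by (simp add: lookup_add distrib_left sum.distrib)
qed

lemma weighted_degree_zero [simp]: "weighted_degree w 0 = 0"
  by (simp add: weighted_degree_def)

lemma weighted_degree_single [simp]: "weighted_degree w (Poly_Mapping.single v n) = w v * n"
  by (simp add: weighted_degree_def)

lemma weighted_degree_sum: "weighted_degree w (sum F A) = (\<Sum>a\<in>A. weighted_degree w (F a))"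
  by (induction A rule: infinite_finite_induct) (simp_all add: weighted_degree_add)

lemma rank_eq_iff: "rank v = rank w \<longleftrightarrow> v = w"
  by (cases v; cases w) auto

lemma lex_less_irrefl: "\<not> lex_less a a"
  by (simp add: lex_less_def)

lemma lex_less_trans:
  assumes "lex_less a b" "lex_less b c"
  shows "lex_less a c"
proof -
  obtain v1 where v1: "Poly_Mapping.lookup a v1 < Poly_Mapping.lookup b v1"
    "\<And>w. rank w < rank v1 \<Longrightarrow> Poly_Mapping.lookup a w = Poly_Mapping.lookup b w"
    using assms(1) unfolding lex_less_def by blast
  obtain v2 where v2: "Poly_Mapping.lookup b v2 < Poly_Mapping.lookup c v2"
    "\<And>w. rank w < rank v2 \<Longrightarrow> Poly_Mapping.lookup b w = Poly_Mapping.lookup c w"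
    using assms(2) unfolding lex_less_def by blast
  consider "rank v1 < rank v2" | "rank v2 < rank v1" | "v1 = v2"
    using rank_eq_iff by (metis less_linear)
  then show ?thesis
  proof cases
    case 1
    then show ?thesis unfolding lex_less_def
      by (intro exI[of _ v1]) (use v1 v2 in \<open>auto intro: order.strict_trans\<close>)
  next
    case 2
    then show ?thesis unfolding lex_less_def
      by (intro exI[of _ v2]) (use v1 v2 in \<open>auto intro: order.strict_trans\<close>)
  next
    case 3
    then show ?thesis unfolding lex_less_def
      by (intro exI[of _ v1]) (use v1 v2 in auto)
  qed
qed

lemma lex_less_asym: "lex_less a b \<Longrightarrow> \<not> lex_less b a"
  using lex_less_trans lex_less_irrefl by blast

lemma lex_less_linear:
  assumes "a \<noteq> b"
  shows "lex_less a b \<or> lex_less b a"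
proof -
  let ?D = "{v. Poly_Mapping.lookup a v \<noteq> Poly_Mapping.lookup b v}"
  have "finite ?D"
    by (rule finite_subset[of _ "Poly_Mapping.keys a \<union> Poly_Mapping.keys b"])
      (auto simp: in_keys_iff)
  moreover have "?D \<noteq> {}"
    using assms poly_mapping_eqI[of a b] by auto
  ultimately have D: "finite (rank ` ?D)" "rank ` ?D \<noteq> {}"
    by auto
  obtain v where v: "v \<in> ?D" "rank v = Min (rank ` ?D)"
    using Min_in[OF D] by auto
  have below: "Poly_Mapping.lookup a w = Poly_Mapping.lookup b w" if "rank w < rank v" for w
  proof (rule ccontr)
    assume "Poly_Mapping.lookup a w \<noteq> Poly_Mapping.lookup b w"
    then have "Min (rank ` ?D) \<le> rank w"
      using D(1) by (intro Min_le) auto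
    then show False
      using that v(2) by simp
  qed
  consider "Poly_Mapping.lookup a v < Poly_Mapping.lookup b v"
    | "Poly_Mapping.lookup b v < Poly_Mapping.lookup a v"
    using v(1) by fastforce
  then show ?thesis
  proof cases
    case 1
    then show ?thesis
      unfolding lex_less_def by (intro disjI1 exI[of _ v]) (simp add: below)
  next
    case 2
    then show ?thesis
      unfolding lex_less_def by (intro disjI2 exI[of _ v]) (simp add: below)
  qed
qed

lemma lex_less_add_left: "lex_less a b \<Longrightarrow> lex_less (m + a) (m + b)"
  unfolding lex_less_def lookup_add by simp

lemma lex_less_zero_single: "0 < n \<Longrightarrow> lex_less 0 (Poly_Mapping.single v n)"
  unfolding lex_less_def by (intro exI[of _ v]) (simp add: lookup_single when_def)

lemma ex_lex_greatest:
  assumes "finite A" "A \<noteq> {}"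
  shows "\<exists>M\<in>A. \<forall>m\<in>A. m \<noteq> M \<longrightarrow> lex_less m M"
  using assms
proof (induction A rule: finite_ne_induct)
  case (insert x A)
  then obtain M where M: "M \<in> A" "\<And>m. m \<in> A \<Longrightarrow> m \<noteq> M \<Longrightarrow> lex_less m M"
    by blast
  show ?case
  proof (cases "lex_less x M")
    case True
    then show ?thesis
      using M by auto
  next
    case False
    have "x \<noteq> M"
      using M(1) insert.hyps(3) by blast
    then have Mx: "lex_less M x"
      using lex_less_linear False by blast
    have "lex_less m x" if "m \<in> A" for m
      using M(2)[OF that] Mx lex_less_trans by (cases "m = M") auto
    then show ?thesis
      by auto
  qed
qed simp

lemma lead_monom_eqI:
  assumes "M \<in> Poly_Mapping.keys f" "\<And>m. m \<in> Poly_Mapping.keys f \<Longrightarrow> m \<noteq> M \<Longrightarrow> lex_less m M"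
  shows "lead_monom f = M"
  unfolding lead_monom_def
proof (rule the_equality)
  fix M'
  assume M': "M' \<in> Poly_Mapping.keys f \<and> (\<forall>m\<in>Poly_Mapping.keys f. m \<noteq> M' \<longrightarrow> lex_less m M')"
  show "M' = M"
  proof (rule ccontr)
    assume "M' \<noteq> M"
    then have "lex_less M' M" "lex_less M M'"
      using assms M' by auto
    then show False
      using lex_less_asym by blast
  qed
qed (use assms in blast)

lemma lead_monom_greatest:
  assumes "f \<noteq> 0"
  shows "lead_monom f \<in> Poly_Mapping.keys f"
    and "\<And>m. m \<in> Poly_Mapping.keys f \<Longrightarrow> m \<noteq> lead_monom f \<Longrightarrow> lex_less m (lead_monom f)"
proof -
  obtain M where M: "M \<in> Poly_Mapping.keys f" "\<forall>m\<in>Poly_Mapping.keys f. m \<noteq> M \<longrightarrow> lex_less m M"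
    using ex_lex_greatest[of "Poly_Mapping.keys f"] assms by auto
  then have "lead_monom f = M"
    by (intro lead_monom_eqI) auto
  then show "lead_monom f \<in> Poly_Mapping.keys f"
    and "\<And>m. m \<in> Poly_Mapping.keys f \<Longrightarrow> m \<noteq> lead_monom f \<Longrightarrow> lex_less m (lead_monom f)"
    using M by auto
qed

lemma LT_binomial:
  assumes "lex_less b a"
  shows "LT (Poly_Mapping.single a 1 - Poly_Mapping.single b c) = Poly_Mapping.single a 1"
proof -
  let ?f = "Poly_Mapping.single a 1 - Poly_Mapping.single b c"
  have "a \<noteq> b"
    using assms lex_less_irrefl by blast
  then have coeff: "Poly_Mapping.lookup ?f a = 1"
    by (simp add: lookup_minus lookup_single)
  have "Poly_Mapping.keys ?f \<subseteq> {a, b}"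
    using keys_diff[of "Poly_Mapping.single a 1" "Poly_Mapping.single b c"] by (auto split: if_splits)
  then have "lead_monom ?f = a"
    using coeff assms by (intro lead_monom_eqI) (simp add: in_keys_iff, blast)
  then show ?thesis
    by (simp add: LT_def coeff)
qed

lemma lookup_lead_monom_sum_single:
  assumes "f \<noteq> 0" "U (lead_monom f) = lead_monom f"
    and "\<And>m. m \<in> Poly_Mapping.keys f \<Longrightarrow> m \<noteq> lead_monom f \<Longrightarrow> U m = m \<or> lex_less (U m) m"
  shows "Poly_Mapping.lookup (\<Sum>m\<in>Poly_Mapping.keys f. Poly_Mapping.single (U m) (c m)) (lead_monom f)
    = c (lead_monom f)"
proof -
  let ?M = "lead_monom f"
  let ?c = "\<lambda>m. Poly_Mapping.lookup (Poly_Mapping.single (U m) (c m)) ?M"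
  have M: "?M \<in> Poly_Mapping.keys f"
    using lead_monom_greatest(1)[OF assms(1)] .
  have "U m \<noteq> ?M" if m: "m \<in> Poly_Mapping.keys f - {?M}" for m
  proof -
    have "lex_less m ?M"
      using lead_monom_greatest(2)[OF assms(1)] m by blast
    moreover have "U m = m \<or> lex_less (U m) m"
      using assms(3) m by blast
    ultimately have "lex_less (U m) ?M"
      using lex_less_trans by auto
    then show ?thesis
      using lex_less_irrefl by auto
  qed
  then have "(\<Sum>m\<in>Poly_Mapping.keys f - {?M}. ?c m) = 0"
    by (intro sum.neutral) (simp add: lookup_single_not_eq)
  moreover have "Poly_Mapping.lookup (\<Sum>m\<in>Poly_Mapping.keys f. Poly_Mapping.single (U m) (c m)) ?M
      = ?c ?M + (\<Sum>m\<in>Poly_Mapping.keys f - {?M}. ?c m)"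
    unfolding lookup_sum by (rule sum.remove[OF finite_keys M])
  ultimately show ?thesis
    using assms(2) by simp
qed

lemma sum_powers_primitive_root:
  assumes "primitive_root n w" "0 < n"
  shows "(\<Sum>j<n. (w ^ d) ^ j) = (if n dvd d then of_nat n else 0)"
proof (cases "n dvd d")
  case True
  then obtain c where "d = n * c" ..
  then have "w ^ d = 1"
    using assms(1) by (simp add: primitive_root_def power_mult)
  then show ?thesis
    using True by simp
next
  case False
  have wn: "w ^ n = 1"
    using assms(1) by (simp add: primitive_root_def)
  have "w ^ d = w ^ (n * (d div n) + d mod n)"
    by simp
  also have "\<dots> = w ^ (d mod n)"
    by (simp only: power_add power_mult wn power_one mult_1)
  finally have "w ^ d = w ^ (d mod n)" .
  moreover have "0 < d mod n" "d mod n < n"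
    using False assms(2) by (auto simp: mod_eq_0_iff_dvd[symmetric])
  ultimately have "w ^ d \<noteq> 1"
    using assms(1) by (simp add: primitive_root_def)
  moreover have "(w ^ d) ^ n = (w ^ n) ^ d"
    by (simp only: power_mult[symmetric] mult.commute)
  ultimately show ?thesis
    using False wn by (simp add: sum_gp_strict)
qed

lemma dvd_add_diff_iff_eq:
  fixes a b n :: nat
  assumes "a < n" "b < n"
  shows "n dvd a + (n - b) \<longleftrightarrow> a = b"
proof
  assume "n dvd a + (n - b)"
  then obtain c where c: "a + (n - b) = n * c" ..
  have "0 < a + (n - b)" "a + (n - b) < 2 * n"
    using assms by auto
  then have "0 < n * c" "n * c < n * 2"
    using c by (simp_all add: mult.commute)
  then have "c = 1"
    by simp
  then show "a = b"
    using c assms by simp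
qed (use assms in simp)

section \<open>Reduction to standard monomials\<close>

locale csp_instance =
  fixes s :: nat and q k r :: "nat \<Rightarrow> nat" and \<omega> :: "nat \<Rightarrow> complex"
    and \<alpha> :: "nat \<Rightarrow> nat \<Rightarrow> nat" and \<beta> :: "nat \<Rightarrow> nat \<Rightarrow> nat \<Rightarrow> nat"
  assumes q_pos: "i \<in> {1..s} \<Longrightarrow> 0 < q i"
    and primitive: "i \<in> {1..s} \<Longrightarrow> primitive_root (q i) (\<omega> i)"
begin

abbreviation "V \<equiv> Vars s k r"
abbreviation "R \<equiv> polyring V"

definition G :: "mpoly set" where
  "G = (\<Union>i\<in>{1..s}. Gi k r q \<omega> \<alpha> \<beta> i)"

definition J :: "mpoly set" where
  "J = ideal_gen R G"

definition Yvars :: "var set" where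
  "Yvars = {Y i j | i j. i \<in> {1..s} \<and> j \<in> {1..r i}}"

definition standard :: "mono \<Rightarrow> bool" where
  "standard u \<longleftrightarrow> Poly_Mapping.keys u \<subseteq> Yvars
     \<and> (\<forall>v\<in>Poly_Mapping.keys u. Poly_Mapping.lookup u v < q (sort_of v))"

definition constr_monom :: "nat \<Rightarrow> nat \<Rightarrow> mono" where
  "constr_monom i t = (\<Sum>j\<in>{1..r i}. Poly_Mapping.single (Y i j) (\<beta> i t j))"

text \<open>A triple \<open>(a, b, c)\<close> stands for the element \<open>a - c b\<close> of \<open>G\<close>, read as the rewrite
  rule \<open>a \<mapsto> c b\<close> on monomials.\<close>

definition rewrite_rules :: "(mono \<times> mono \<times> complex) set" where
  "rewrite_rules =
     {(Poly_Mapping.single (X i t) 1, constr_monom i t, \<omega> i ^ \<alpha> i t) | i t.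
        i \<in> {1..s} \<and> t \<in> {1..k i}}
   \<union> {(Poly_Mapping.single (Y i j) (q i), 0, 1) | i j. i \<in> {1..s} \<and> j \<in> {1..r i}}"

text \<open>The weight of \<open>x\<^sub>i\<^sub>,\<^sub>t\<close> exceeds the degree of the monomial it is rewritten to,
  so every rewrite step lowers the weight.\<close>

definition var_weight :: "var \<Rightarrow> nat" where
  "var_weight v = (case v of X i t \<Rightarrow> Suc (\<Sum>j\<in>{1..r i}. \<beta> i t j) | Y i j \<Rightarrow> 1)"

abbreviation "weight \<equiv> weighted_degree var_weight"

lemma X_in_Vars [simp]: "X i t \<in> V \<longleftrightarrow> i \<in> {1..s} \<and> t \<in> {1..k i}"
  by (simp add: Vars_def)

lemma Y_in_Vars [simp]: "Y i j \<in> V \<longleftrightarrow> i \<in> {1..s} \<and> j \<in> {1..r i}"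
  by (simp add: Vars_def)

lemma Y_in_Yvars [simp]: "Y i j \<in> Yvars \<longleftrightarrow> i \<in> {1..s} \<and> j \<in> {1..r i}"
  by (simp add: Yvars_def)

lemma finite_Yvars: "finite Yvars"
proof -
  have "Yvars \<subseteq> (\<lambda>(i, j). Y i j) ` (SIGMA i:{1..s}. {1..r i})"
    unfolding Yvars_def by auto
  then show ?thesis
    by (rule finite_subset) auto
qed

lemma sort_of_Yvars: "v \<in> Yvars \<Longrightarrow> sort_of v \<in> {1..s}"
  unfolding Yvars_def by auto

lemma keys_constr_monom:
  assumes "i \<in> {1..s}"
  shows "Poly_Mapping.keys (constr_monom i t) \<subseteq> V"
proof -
  have "Poly_Mapping.keys (constr_monom i t)
      \<subseteq> (\<Union>j\<in>{1..r i}. Poly_Mapping.keys (Poly_Mapping.single (Y i j) (\<beta> i t j)))"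
    unfolding constr_monom_def by (rule keys_sum)
  then show ?thesis
    using assms by (auto split: if_splits)
qed

lemma lookup_constr_monom_X [simp]: "Poly_Mapping.lookup (constr_monom i t) (X a b) = 0"
  by (simp add: constr_monom_def lookup_sum lookup_single)

lemma constr_poly_eq:
  "constr_poly r \<omega> \<alpha> \<beta> i t
     = Poly_Mapping.single (Poly_Mapping.single (X i t) 1) 1
       - Poly_Mapping.single (constr_monom i t) (\<omega> i ^ \<alpha> i t)"
proof -
  have "(\<Prod>j\<in>{1..r i}. Var (Y i j) ^ \<beta> i t j) = Poly_Mapping.single (constr_monom i t) 1"
    by (simp add: Var_power prod_single_one constr_monom_def)
  then show ?thesis
    by (simp add: constr_poly_def Var_def Const_mult_single)
qed

lemma rewrite_rulesE:
  assumes "(a, b, c) \<in> rewrite_rules"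
  obtains (constr) i t where "i \<in> {1..s}" "t \<in> {1..k i}" "a = Poly_Mapping.single (X i t) 1"
      "b = constr_monom i t" "c = \<omega> i ^ \<alpha> i t"
    | (domain) i j where "i \<in> {1..s}" "j \<in> {1..r i}" "a = Poly_Mapping.single (Y i j) (q i)"
      "b = 0" "c = 1"
  using assms unfolding rewrite_rules_def by blast

lemma rewrite_rule_in_G:
  assumes "(a, b, c) \<in> rewrite_rules"
  shows "Poly_Mapping.single a 1 - Poly_Mapping.single b c \<in> G"
  using assms
proof (cases rule: rewrite_rulesE)
  case (constr i t)
  then have "Poly_Mapping.single a 1 - Poly_Mapping.single b c = constr_poly r \<omega> \<alpha> \<beta> i t"
    by (simp add: constr_poly_eq)
  then show ?thesis
    using constr(1,2) unfolding G_def Gi_def by blast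
next
  case (domain i j)
  then have "Poly_Mapping.single a 1 - Poly_Mapping.single b c = Var (Y i j) ^ q i - 1"
    by (simp add: Var_power)
  then show ?thesis
    using domain(1,2) unfolding G_def Gi_def by blast
qed

lemma G_eq: "G = (\<lambda>(a, b, c). Poly_Mapping.single a 1 - Poly_Mapping.single b c) ` rewrite_rules"
proof (intro equalityI subsetI)
  fix g
  assume "g \<in> G"
  then obtain i where i: "i \<in> {1..s}" and "g \<in> Gi k r q \<omega> \<alpha> \<beta> i"
    by (auto simp: G_def)
  then consider (constr) t where "t \<in> {1..k i}" "g = constr_poly r \<omega> \<alpha> \<beta> i t"
    | (domain) j where "j \<in> {1..r i}" "g = Var (Y i j) ^ q i - 1"
    by (auto simp: Gi_def)
  then show "g \<in> (\<lambda>(a, b, c). Poly_Mapping.single a 1 - Poly_Mapping.single b c) ` rewrite_rules"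
  proof cases
    case constr
    then show ?thesis
      using i by (intro rev_image_eqI[of "(Poly_Mapping.single (X i t) 1, constr_monom i t, \<omega> i ^ \<alpha> i t)"])
        (auto simp: rewrite_rules_def constr_poly_eq)
  next
    case domain
    then show ?thesis
      using i by (intro rev_image_eqI[of "(Poly_Mapping.single (Y i j) (q i), 0, 1)"])
        (auto simp: rewrite_rules_def Var_power)
  qed
qed (auto intro: rewrite_rule_in_G)

lemma lex_less_constr_monom: "lex_less (constr_monom i t) (Poly_Mapping.single (X i t) 1)"
  unfolding lex_less_def
proof (intro exI[of _ "X i t"] conjI allI impI)
  fix w
  assume "rank w < rank (X i t)"
  then obtain a b where "w = X a b" "w \<noteq> X i t"
    by (cases w) auto
  then show "Poly_Mapping.lookup (constr_monom i t) w = Poly_Mapping.lookup (Poly_Mapping.single (X i t) 1) w"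
    by (auto simp: lookup_single when_def)
qed simp

lemma weight_constr_monom: "weight (constr_monom i t) < weight (Poly_Mapping.single (X i t) 1)"
  by (simp add: constr_monom_def weighted_degree_sum var_weight_def)

lemma rewrite_rule_keys:
  assumes "(a, b, c) \<in> rewrite_rules"
  shows "Poly_Mapping.keys a \<subseteq> V \<and> Poly_Mapping.keys b \<subseteq> V"
  using assms by (cases rule: rewrite_rulesE) (use keys_constr_monom in auto)

lemma rewrite_rule_lex_less:
  assumes "(a, b, c) \<in> rewrite_rules"
  shows "lex_less b a"
  using assms by (cases rule: rewrite_rulesE) (use lex_less_constr_monom lex_less_zero_single q_pos in auto)

lemma rewrite_rule_weight_less:
  assumes "(a, b, c) \<in> rewrite_rules"
  shows "weight b < weight a"
  using assms
  by (cases rule: rewrite_rulesE) (use weight_constr_monom q_pos in \<open>auto simp: var_weight_def\<close>)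

lemma G_subset_R: "G \<subseteq> R"
proof
  fix g
  assume "g \<in> G"
  then obtain a b c where "(a, b, c) \<in> rewrite_rules"
    and "g = Poly_Mapping.single a 1 - Poly_Mapping.single b c"
    by (auto simp: G_eq)
  then show "g \<in> R"
    using rewrite_rule_keys by (simp add: polyring_binomial)
qed

lemma is_ideal_J: "is_ideal R J"
  unfolding J_def using G_subset_R by (rule is_ideal_ideal_gen)

lemma G_subset_J: "G \<subseteq> J"
  unfolding J_def by (rule ideal_gen_subset)

lemma rewrite_step_in_J:
  assumes "(a, b, c) \<in> rewrite_rules" "Poly_Mapping.keys m \<subseteq> V"
  shows "Poly_Mapping.single (m + a) 1 - Poly_Mapping.single (m + b) c \<in> J"
proof -
  have "Poly_Mapping.single a 1 - Poly_Mapping.single b c \<in> J"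
    using rewrite_rule_in_G[OF assms(1)] G_subset_J by blast
  with is_ideal_J polyring_single[OF assms(2)]
  have "Poly_Mapping.single m 1 * (Poly_Mapping.single a 1 - Poly_Mapping.single b c) \<in> J"
    by (rule is_ideal_mult)
  then show ?thesis
    by (simp add: right_diff_distrib mult_single)
qed

lemma nonstandard_decompose:
  assumes "Poly_Mapping.keys m \<subseteq> V" "\<not> standard m"
  obtains a b c m' where "(a, b, c) \<in> rewrite_rules" "m = m' + a"
proof (cases "\<exists>i t. X i t \<in> Poly_Mapping.keys m")
  case True
  then obtain i t where x: "X i t \<in> Poly_Mapping.keys m"
    by blast
  then have "i \<in> {1..s}" "t \<in> {1..k i}"
    using assms(1) by auto
  then have "(Poly_Mapping.single (X i t) 1, constr_monom i t, \<omega> i ^ \<alpha> i t) \<in> rewrite_rules"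
    unfolding rewrite_rules_def by blast
  moreover have "m = (m - Poly_Mapping.single (X i t) 1) + Poly_Mapping.single (X i t) 1"
    by (rule split_monomial) (use x in \<open>simp add: in_keys_iff\<close>)
  ultimately show ?thesis
    by (rule that)
next
  case False
  have "Poly_Mapping.keys m \<subseteq> Yvars"
  proof
    fix v
    assume "v \<in> Poly_Mapping.keys m"
    then show "v \<in> Yvars"
      using False assms(1) by (cases v) auto
  qed
  moreover obtain y where y: "y \<in> Poly_Mapping.keys m" "q (sort_of y) \<le> Poly_Mapping.lookup m y"
    using assms(2) calculation by (auto simp: standard_def not_less)
  ultimately obtain i j where ij: "y = Y i j" "i \<in> {1..s}" "j \<in> {1..r i}"
    unfolding Yvars_def by blast
  then have "(Poly_Mapping.single y (q i), 0, 1) \<in> rewrite_rules"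
    unfolding rewrite_rules_def by blast
  moreover have "m = (m - Poly_Mapping.single y (q i)) + Poly_Mapping.single y (q i)"
    by (rule split_monomial) (use y ij in simp)
  ultimately show ?thesis
    by (rule that)
qed

lemma reduce_to_standard:
  assumes "Poly_Mapping.keys m \<subseteq> V" "\<not> standard m"
  shows "\<exists>u c. standard u \<and> lex_less u m \<and> Poly_Mapping.single m 1 - Poly_Mapping.single u c \<in> J"
  using assms
proof (induction "weight m" arbitrary: m rule: less_induct)
  case less
  obtain a b c m' where rule: "(a, b, c) \<in> rewrite_rules" and m: "m = m' + a"
    using nonstandard_decompose[OF less.prems] .
  have m': "Poly_Mapping.keys m' \<subseteq> V"
    using less.prems(1) by (simp add: m keys_add_nat)
  define n where "n = m' + b"
  have step: "Poly_Mapping.single m 1 - Poly_Mapping.single n c \<in> J"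
    unfolding m n_def using rule m' by (rule rewrite_step_in_J)
  have "lex_less n m"
    unfolding m n_def using rewrite_rule_lex_less[OF rule] by (rule lex_less_add_left)
  show ?case
  proof (cases "standard n")
    case True
    then show ?thesis
      using step \<open>lex_less n m\<close> by blast
  next
    case False
    have "weight n < weight m"
      using rewrite_rule_weight_less[OF rule] by (simp add: m n_def weighted_degree_add)
    moreover have "Poly_Mapping.keys n \<subseteq> V"
      using m' rewrite_rule_keys[OF rule] by (simp add: n_def keys_add_nat)
    ultimately obtain u c' where u: "standard u" "lex_less u n"
      and "Poly_Mapping.single n 1 - Poly_Mapping.single u c' \<in> J"
      using less.hyps False by blast
    then have "(Poly_Mapping.single m 1 - Poly_Mapping.single n c)
        + Const c * (Poly_Mapping.single n 1 - Poly_Mapping.single u c') \<in> J"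
      using step is_ideal_J by (intro is_ideal_add is_ideal_mult) auto
    then have "Poly_Mapping.single m 1 - Poly_Mapping.single u (c * c') \<in> J"
      by (simp add: right_diff_distrib Const_mult_single)
    then show ?thesis
      using u \<open>lex_less n m\<close> lex_less_trans by blast
  qed
qed

lemma monomial_normal_form:
  obtains U C where
    "\<And>m. Poly_Mapping.keys m \<subseteq> V \<Longrightarrow> standard (U m)"
    "\<And>m. standard m \<Longrightarrow> U m = m \<and> C m = 1"
    "\<And>m. Poly_Mapping.keys m \<subseteq> V \<Longrightarrow> \<not> standard m \<Longrightarrow> lex_less (U m) m"
    "\<And>m. Poly_Mapping.keys m \<subseteq> V \<Longrightarrow> Poly_Mapping.single m 1 - Poly_Mapping.single (U m) (C m) \<in> J"
proof -
  define P where "P m uc \<longleftrightarrow> (standard m \<longrightarrow> fst uc = m \<and> snd uc = 1)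
    \<and> (Poly_Mapping.keys m \<subseteq> V \<longrightarrow> standard (fst uc) \<and> (\<not> standard m \<longrightarrow> lex_less (fst uc) m)
         \<and> Poly_Mapping.single m 1 - Poly_Mapping.single (fst uc) (snd uc) \<in> J)" for m uc
  have "\<exists>uc. P m uc" for m
  proof (cases "Poly_Mapping.keys m \<subseteq> V \<and> \<not> standard m")
    case True
    then obtain u c where "standard u" "lex_less u m"
      "Poly_Mapping.single m 1 - Poly_Mapping.single u c \<in> J"
      using reduce_to_standard by blast
    then show ?thesis
      using True unfolding P_def by (intro exI[of _ "(u, c)"]) simp
  next
    case False
    then show ?thesis
      using is_ideal_zero[OF is_ideal_J] unfolding P_def by (intro exI[of _ "(m, 1)"]) auto
  qed
  then obtain F where "\<And>m. P m (F m)"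
    using choice by metis
  then show thesis
    by (intro that[of "\<lambda>m. fst (F m)" "\<lambda>m. snd (F m)"]) (simp_all add: P_def)
qed

lemma normal_form:
  assumes "f \<in> R"
  obtains g where "\<forall>u\<in>Poly_Mapping.keys g. standard u" "f - g \<in> J"
    "f \<noteq> 0 \<Longrightarrow> standard (lead_monom f)
       \<Longrightarrow> Poly_Mapping.lookup g (lead_monom f) = Poly_Mapping.lookup f (lead_monom f)"
proof -
  obtain U C where
    U_std: "\<And>m. Poly_Mapping.keys m \<subseteq> V \<Longrightarrow> standard (U m)" and
    U_fix: "\<And>m. standard m \<Longrightarrow> U m = m \<and> C m = 1" and
    U_less: "\<And>m. Poly_Mapping.keys m \<subseteq> V \<Longrightarrow> \<not> standard m \<Longrightarrow> lex_less (U m) m" and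
    U_J: "\<And>m. Poly_Mapping.keys m \<subseteq> V \<Longrightarrow> Poly_Mapping.single m 1 - Poly_Mapping.single (U m) (C m) \<in> J"
    using monomial_normal_form by blast
  have keys_f: "Poly_Mapping.keys m \<subseteq> V" if "m \<in> Poly_Mapping.keys f" for m
    using assms that by (simp add: polyring_def)
  define g where "g = (\<Sum>m\<in>Poly_Mapping.keys f.
    Poly_Mapping.single (U m) (Poly_Mapping.lookup f m * C m))"
  have "standard u" if u: "u \<in> Poly_Mapping.keys g" for u
  proof -
    have "u \<in> (\<Union>m\<in>Poly_Mapping.keys f.
        Poly_Mapping.keys (Poly_Mapping.single (U m) (Poly_Mapping.lookup f m * C m)))"
      using u unfolding g_def by (rule subsetD[OF keys_sum])
    then obtain m where "m \<in> Poly_Mapping.keys f" "u = U m"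
      by (auto split: if_splits)
    then show ?thesis
      using U_std keys_f by simp
  qed
  moreover have "f - g \<in> J"
  proof -
    have "f - g = (\<Sum>m\<in>Poly_Mapping.keys f. Poly_Mapping.single m (Poly_Mapping.lookup f m)
        - Poly_Mapping.single (U m) (Poly_Mapping.lookup f m * C m))"
      by (simp only: g_def sum_subtractf poly_mapping_sum_monomials[symmetric])
    also have "\<dots> = (\<Sum>m\<in>Poly_Mapping.keys f. Const (Poly_Mapping.lookup f m)
        * (Poly_Mapping.single m 1 - Poly_Mapping.single (U m) (C m)))"
      by (simp add: right_diff_distrib Const_mult_single)
    also have "\<dots> \<in> J"
      using U_J keys_f by (intro is_ideal_sum[OF is_ideal_J] is_ideal_mult[OF is_ideal_J polyring_Const]) blast
    finally show ?thesis .
  qed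
  moreover have "Poly_Mapping.lookup g (lead_monom f) = Poly_Mapping.lookup f (lead_monom f)"
    if "f \<noteq> 0" and std: "standard (lead_monom f)"
  proof -
    have "U m = m \<or> lex_less (U m) m" if "m \<in> Poly_Mapping.keys f" for m
      using U_fix U_less keys_f[OF that] by blast
    then show ?thesis
      unfolding g_def using U_fix[OF std] \<open>f \<noteq> 0\<close>
      by (subst lookup_lead_monom_sum_single) auto
  qed
  ultimately show ?thesis
    using that by blast
qed

section \<open>Standard polynomials vanishing on the solutions\<close>

definition root_point :: "(var \<Rightarrow> nat) \<Rightarrow> var \<Rightarrow> complex" where
  "root_point e v = (if v \<in> V then \<omega> (sort_of v) ^ (case v of
       X i t \<Rightarrow> \<alpha> i t + (\<Sum>j\<in>{1..r i}. e (Y i j) * \<beta> i t j)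
     | Y i j \<Rightarrow> e v)
   else 0)"

definition exponent_vectors :: "(var \<Rightarrow> nat) set" where
  "exponent_vectors = PiE Yvars (\<lambda>v. {..<q (sort_of v)})"

lemma root_point_in_Sol: "root_point e \<in> Sol s k r q \<omega> \<alpha> \<beta>"
proof -
  have "root_point e v ^ q (sort_of v) = 1" if "v \<in> V" for v
  proof -
    have "sort_of v \<in> {1..s}"
      using that by (cases v) auto
    then have "\<omega> (sort_of v) ^ q (sort_of v) = 1"
      using primitive by (simp add: primitive_root_def)
    then show ?thesis
      using that by (simp add: root_point_def power_mult[symmetric] mult.commute power_mult)
  qed
  moreover have "root_point e (X i t) = \<omega> i ^ \<alpha> i t * (\<Prod>j\<in>{1..r i}. root_point e (Y i j) ^ \<beta> i t j)"
    if "i \<in> {1..s}" "t \<in> {1..k i}" for i t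
  proof -
    have "(\<Prod>j\<in>{1..r i}. root_point e (Y i j) ^ \<beta> i t j) = (\<Prod>j\<in>{1..r i}. \<omega> i ^ (e (Y i j) * \<beta> i t j))"
      using that by (intro prod.cong) (simp_all add: root_point_def power_mult)
    then show ?thesis
      using that by (simp add: root_point_def power_add power_sum)
  qed
  ultimately show ?thesis
    unfolding Sol_def by (auto simp: root_point_def)
qed

lemma standard_lookup_less: "standard u \<Longrightarrow> v \<in> Yvars \<Longrightarrow> Poly_Mapping.lookup u v < q (sort_of v)"
  using q_pos[OF sort_of_Yvars] by (cases "v \<in> Poly_Mapping.keys u") (auto simp: standard_def in_keys_iff)

definition character :: "(var \<Rightarrow> nat) \<Rightarrow> (var \<Rightarrow> nat) \<Rightarrow> complex" where
  "character d e = (\<Prod>v\<in>Yvars. \<omega> (sort_of v) ^ (d v * e v))"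

lemma character_mult: "character d e * character d' e = character (\<lambda>v. d v + d' v) e"
  by (simp add: character_def prod.distrib[symmetric] power_add[symmetric] add_mult_distrib)

lemma mono_eval_root_point:
  assumes "standard u"
  shows "mono_eval (root_point e) u = character (Poly_Mapping.lookup u) e"
proof -
  have "mono_eval (root_point e) u = (\<Prod>v\<in>Yvars. root_point e v ^ Poly_Mapping.lookup u v)"
    using assms finite_Yvars by (intro mono_eval_superset) (auto simp: standard_def)
  also have "\<dots> = character (Poly_Mapping.lookup u) e"
    unfolding character_def
    by (rule prod.cong) (auto simp: Yvars_def root_point_def power_mult[symmetric] mult.commute)
  finally show ?thesis .
qed

lemma character_orthogonality:
  assumes "standard u" "standard u'"
  shows "(\<Sum>e\<in>exponent_vectors.
            character (\<lambda>v. Poly_Mapping.lookup u v + (q (sort_of v) - Poly_Mapping.lookup u' v)) e)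
       = (if u = u' then (\<Prod>v\<in>Yvars. of_nat (q (sort_of v))) else 0)"
proof -
  define d where "d v = Poly_Mapping.lookup u v + (q (sort_of v) - Poly_Mapping.lookup u' v)" for v
  have "(\<Sum>e\<in>exponent_vectors. character d e)
      = (\<Prod>v\<in>Yvars. \<Sum>j<q (sort_of v). (\<omega> (sort_of v) ^ d v) ^ j)"
    unfolding exponent_vectors_def character_def power_mult
    by (rule prod_sum_PiE[symmetric]) (simp_all add: finite_Yvars)
  also have "\<dots> = (\<Prod>v\<in>Yvars. if Poly_Mapping.lookup u v = Poly_Mapping.lookup u' v
                                then of_nat (q (sort_of v)) else 0)"
  proof (rule prod.cong)
    fix v
    assume v: "v \<in> Yvars"
    then have "q (sort_of v) dvd d v \<longleftrightarrow> Poly_Mapping.lookup u v = Poly_Mapping.lookup u' v"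
      unfolding d_def using assms by (intro dvd_add_diff_iff_eq standard_lookup_less)
    then show "(\<Sum>j<q (sort_of v). (\<omega> (sort_of v) ^ d v) ^ j)
        = (if Poly_Mapping.lookup u v = Poly_Mapping.lookup u' v then of_nat (q (sort_of v)) else 0)"
      using sum_powers_primitive_root[OF primitive q_pos, OF sort_of_Yvars[OF v] sort_of_Yvars[OF v]]
      by simp
  qed simp
  also have "\<dots> = (if u = u' then (\<Prod>v\<in>Yvars. of_nat (q (sort_of v))) else 0)"
  proof (cases "u = u'")
    case False
    then obtain v where v: "Poly_Mapping.lookup u v \<noteq> Poly_Mapping.lookup u' v"
      by (metis poly_mapping_eqI)
    then have "v \<in> Poly_Mapping.keys u \<union> Poly_Mapping.keys u'"
      by (auto simp: in_keys_iff)
    then have "v \<in> Yvars"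
      using assms by (auto simp: standard_def)
    then show ?thesis
      using False v by (auto simp: prod_zero_iff[OF finite_Yvars])
  qed simp
  finally show ?thesis
    by (simp only: d_def[abs_def])
qed

text \<open>Averaging against the character conjugate to \<open>u'\<close> extracts the coefficient of \<open>u'\<close>.\<close>

lemma sum_eval_root_point_character:
  assumes "\<forall>u\<in>Poly_Mapping.keys g. standard u" "standard u'"
  shows "(\<Sum>e\<in>exponent_vectors.
            eval (root_point e) g * character (\<lambda>v. q (sort_of v) - Poly_Mapping.lookup u' v) e)
       = Poly_Mapping.lookup g u' * (\<Prod>v\<in>Yvars. of_nat (q (sort_of v)))"
proof -
  let ?W = "character (\<lambda>v. q (sort_of v) - Poly_Mapping.lookup u' v)"
  let ?Q = "\<Prod>v\<in>Yvars. of_nat (q (sort_of v)) :: complex"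
  have "(\<Sum>e\<in>exponent_vectors. eval (root_point e) g * ?W e)
      = (\<Sum>u\<in>Poly_Mapping.keys g. Poly_Mapping.lookup g u
           * (\<Sum>e\<in>exponent_vectors. mono_eval (root_point e) u * ?W e))"
    unfolding eval_def sum_distrib_left sum_distrib_right
    by (subst sum.swap) (simp add: mult.assoc)
  also have "\<dots> = (\<Sum>u\<in>Poly_Mapping.keys g. Poly_Mapping.lookup g u * (if u = u' then ?Q else 0))"
    using assms by (intro sum.cong) (simp_all add: mono_eval_root_point character_mult
        character_orthogonality)
  also have "\<dots> = (if u' \<in> Poly_Mapping.keys g then Poly_Mapping.lookup g u' * ?Q else 0)"
    by (simp add: if_distrib sum.delta cong: if_cong)
  also have "\<dots> = Poly_Mapping.lookup g u' * ?Q"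
    by (simp add: in_keys_iff)
  finally show ?thesis .
qed

lemma standard_vanishing_eq_0:
  assumes std: "\<forall>u\<in>Poly_Mapping.keys g. standard u"
    and van: "g \<in> vanishing_ideal R (Sol s k r q \<omega> \<alpha> \<beta>)"
  shows "g = 0"
proof (rule ccontr)
  assume "g \<noteq> 0"
  then obtain u' where u': "u' \<in> Poly_Mapping.keys g"
    by (metis keys_eq_empty ex_in_conv)
  have "(\<Prod>v\<in>Yvars. of_nat (q (sort_of v)) :: complex) \<noteq> 0"
    using q_pos sort_of_Yvars finite_Yvars by (auto simp: prod_zero_iff)
  moreover have "Poly_Mapping.lookup g u' * (\<Prod>v\<in>Yvars. of_nat (q (sort_of v))) = 0"
    using sum_eval_root_point_character[OF std, of u'] std u' van root_point_in_Sol
    by (simp add: vanishing_ideal_def)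
  ultimately show False
    using u' by (simp add: in_keys_iff)
qed

section \<open>The Groebner basis\<close>

lemma instance_ideal_subset_vanishing_ideal:
  "instance_ideal s k r q \<omega> \<alpha> \<beta> \<subseteq> vanishing_ideal R (Sol s k r q \<omega> \<alpha> \<beta>)"
  unfolding instance_ideal_def
proof (rule ideal_gen_least[OF is_ideal_vanishing_ideal], rule subsetI)
  fix g
  assume "g \<in> {Var v ^ q (sort_of v) - 1 | v. v \<in> V}
    \<union> {constr_poly r \<omega> \<alpha> \<beta> i t | i t. i \<in> {1..s} \<and> t \<in> {1..k i}}"
  then consider (domain) v where "v \<in> V" "g = Var v ^ q (sort_of v) - 1"
    | (constr) i t where "i \<in> {1..s}" "t \<in> {1..k i}" "g = constr_poly r \<omega> \<alpha> \<beta> i t"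
    by blast
  then show "g \<in> vanishing_ideal R (Sol s k r q \<omega> \<alpha> \<beta>)"
  proof cases
    case domain
    then show ?thesis
      by (auto simp: vanishing_ideal_def Sol_def eval_diff eval_power
          intro!: polyring_diff polyring_power polyring_Var)
  next
    case constr
    then have "g \<in> G"
      unfolding G_def Gi_def by blast
    then have "g \<in> R"
      using G_subset_R by blast
    then show ?thesis
      using constr by (auto simp: vanishing_ideal_def Sol_def constr_poly_def eval_diff eval_mult
          eval_prod eval_power)
  qed
qed

lemma J_subset_instance_ideal: "J \<subseteq> instance_ideal s k r q \<omega> \<alpha> \<beta>"
  unfolding J_def instance_ideal_def
proof (rule ideal_gen_mono, rule subsetI)
  fix g
  assume "g \<in> G"
  then obtain i where i: "i \<in> {1..s}" and "g \<in> Gi k r q \<omega> \<alpha> \<beta> i"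
    by (auto simp: G_def)
  then consider (constr) t where "t \<in> {1..k i}" "g = constr_poly r \<omega> \<alpha> \<beta> i t"
    | (domain) j where "Y i j \<in> V" "g = Var (Y i j) ^ q (sort_of (Y i j)) - 1"
    by (auto simp: Gi_def)
  then show "g \<in> {Var v ^ q (sort_of v) - 1 | v. v \<in> V}
      \<union> {constr_poly r \<omega> \<alpha> \<beta> i t | i t. i \<in> {1..s} \<and> t \<in> {1..k i}}"
    by cases (use i in blast)+
qed

lemma vanishing_ideal_subset_J: "vanishing_ideal R (Sol s k r q \<omega> \<alpha> \<beta>) \<subseteq> J"
proof
  fix f
  assume f: "f \<in> vanishing_ideal R (Sol s k r q \<omega> \<alpha> \<beta>)"
  then have "f \<in> R"
    by (simp add: vanishing_ideal_def)
  then obtain g where g: "\<forall>u\<in>Poly_Mapping.keys g. standard u" "f - g \<in> J"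
    by (rule normal_form)
  have "f - g \<in> vanishing_ideal R (Sol s k r q \<omega> \<alpha> \<beta>)"
    using g(2) J_subset_instance_ideal instance_ideal_subset_vanishing_ideal by blast
  then have "f - (f - g) \<in> vanishing_ideal R (Sol s k r q \<omega> \<alpha> \<beta>)"
    using f by (rule is_ideal_diff[OF is_ideal_vanishing_ideal, rotated])
  then have "g = 0"
    using g(1) standard_vanishing_eq_0 by simp
  then show "f \<in> J"
    using g(2) by simp
qed

lemma instance_ideal_eq_J: "instance_ideal s k r q \<omega> \<alpha> \<beta> = J"
  using J_subset_instance_ideal instance_ideal_subset_vanishing_ideal vanishing_ideal_subset_J
  by blast

lemma vanishing_ideal_eq_J: "vanishing_ideal R (Sol s k r q \<omega> \<alpha> \<beta>) = J"
  using J_subset_instance_ideal instance_ideal_subset_vanishing_ideal vanishing_ideal_subset_J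
  by blast

lemma lead_monom_not_standard:
  assumes "f \<in> J" "f \<noteq> 0"
  shows "\<not> standard (lead_monom f)"
proof
  assume std: "standard (lead_monom f)"
  have "f \<in> R"
    using assms(1) is_ideal_J by (auto simp: is_ideal_def)
  then obtain g where g: "\<forall>u\<in>Poly_Mapping.keys g. standard u" "f - g \<in> J"
    and lead: "Poly_Mapping.lookup g (lead_monom f) = Poly_Mapping.lookup f (lead_monom f)"
    using normal_form std assms(2) by metis
  have "f - (f - g) \<in> J"
    using is_ideal_J assms(1) g(2) by (rule is_ideal_diff)
  then have "g = 0"
    using g(1) standard_vanishing_eq_0 vanishing_ideal_eq_J by simp
  then show False
    using lead lead_monom_greatest(1)[OF assms(2)] by (simp add: in_keys_iff)
qed

lemma LT_G_eq: "LT ` G = (\<lambda>(a, b, c). Poly_Mapping.single a 1) ` rewrite_rules"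
  unfolding G_eq image_image
  by (intro image_cong) (auto simp: LT_binomial rewrite_rule_lex_less)

lemma LT_G_subset_R: "LT ` G \<subseteq> R"
  unfolding LT_G_eq using rewrite_rule_keys by (auto intro!: polyring_single)

lemma LT_in_ideal_gen_LT_G:
  assumes "f \<in> J"
  shows "LT f \<in> ideal_gen R (LT ` G)"
proof (cases "f = 0")
  case True
  then show ?thesis
    using is_ideal_zero[OF is_ideal_ideal_gen[OF LT_G_subset_R]] by (simp add: LT_def)
next
  case False
  let ?M = "lead_monom f"
  have "f \<in> R"
    using assms is_ideal_J by (auto simp: is_ideal_def)
  then have M: "Poly_Mapping.keys ?M \<subseteq> V"
    using lead_monom_greatest(1)[OF False] by (auto simp: polyring_def)
  then obtain a b c M' where rule: "(a, b, c) \<in> rewrite_rules" and M_eq: "?M = M' + a"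
    using nonstandard_decompose lead_monom_not_standard[OF assms False] by metis
  have "Poly_Mapping.keys M' \<subseteq> V"
    using M by (simp add: M_eq keys_add_nat)
  moreover have "Poly_Mapping.single a 1 \<in> ideal_gen R (LT ` G)"
    using rule by (intro subsetD[OF ideal_gen_subset]) (force simp: LT_G_eq)
  ultimately have "Poly_Mapping.single M' (Poly_Mapping.lookup f ?M) * Poly_Mapping.single a 1
      \<in> ideal_gen R (LT ` G)"
    by (intro is_ideal_mult[OF is_ideal_ideal_gen[OF LT_G_subset_R]] polyring_single)
  then show ?thesis
    by (simp add: LT_def M_eq mult_single)
qed

theorem groebner_basis_G:
  "instance_ideal s k r q \<omega> \<alpha> \<beta> = vanishing_ideal R (Sol s k r q \<omega> \<alpha> \<beta>)
   \<and> groebner_basis R G (instance_ideal s k r q \<omega> \<alpha> \<beta>)"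
proof
  show "instance_ideal s k r q \<omega> \<alpha> \<beta> = vanishing_ideal R (Sol s k r q \<omega> \<alpha> \<beta>)"
    by (simp add: instance_ideal_eq_J vanishing_ideal_eq_J)
  have "ideal_gen R (LT ` J) \<subseteq> ideal_gen R (LT ` G)"
    using LT_in_ideal_gen_LT_G by (intro ideal_gen_least[OF is_ideal_ideal_gen[OF LT_G_subset_R]]) blast
  moreover have "ideal_gen R (LT ` G) \<subseteq> ideal_gen R (LT ` J)"
    using G_subset_J by (intro ideal_gen_mono image_mono)
  moreover have "finite G"
    by (simp add: G_def Gi_def)
  ultimately show "groebner_basis R G (instance_ideal s k r q \<omega> \<alpha> \<beta>)"
    using G_subset_J by (simp add: groebner_basis_def instance_ideal_eq_J)
qed

end

theorem lemma5p5:
  fixes s :: nat and p m q k r :: "nat \<Rightarrow> nat" and \<omega> :: "nat \<Rightarrow> complex"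
    and \<alpha> :: "nat \<Rightarrow> nat \<Rightarrow> nat" and \<beta> :: "nat \<Rightarrow> nat \<Rightarrow> nat \<Rightarrow> nat"
  assumes "\<forall>i\<in>{1..s}. prime (p i)"
    and "\<forall>i\<in>{1..s}. m i \<ge> 1"
    and "\<forall>i\<in>{1..s}. q i = p i ^ m i"
    and "\<forall>i\<in>{1..s}. primitive_root (q i) (\<omega> i)"
    and "\<forall>i\<in>{1..s}. \<forall>t\<in>{1..k i}. \<alpha> i t < q i"
    and "\<forall>i\<in>{1..s}. \<forall>t\<in>{1..k i}. \<forall>j\<in>{1..r i}. \<beta> i t j < q i"
  shows "instance_ideal s k r q \<omega> \<alpha> \<beta>
           = vanishing_ideal (polyring (Vars s k r)) (Sol s k r q \<omega> \<alpha> \<beta>)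
       \<and> groebner_basis (polyring (Vars s k r)) (\<Union>i\<in>{1..s}. Gi k r q \<omega> \<alpha> \<beta> i)
           (instance_ideal s k r q \<omega> \<alpha> \<beta>)"
proof -
  interpret csp_instance s q k r \<omega> \<alpha> \<beta>
  proof
    fix i
    assume "i \<in> {1..s}"
    then show "0 < q i" "primitive_root (q i) (\<omega> i)"
      using assms(1,3,4) by (simp_all add: prime_gt_0_nat)
  qed
  show ?thesis
    using groebner_basis_G unfolding G_def .
qed

end
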